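(* Let $G$ be a directed graph on $n$ vertices and let $u,v,x$ be vertices of $G$ such that the arc $\overrightarrow{uv}$ is not in $G$. Assume that adding the arc $\overrightarrow{uv}$ to $G$ decreases the cost of $u$ by $s$, where $s>n\operatorname{dist}(x,u)$. Then adding the arc $\overrightarrow{xv}$ to $G$ decreases the cost of $x$ by at least $s-n\operatorname{dist}(x,u)$.
   Context: For a directed graph $G$ on $n$ vertices, $U(G)$ is the undirected multigraph obtained by ignoring arc directions, and $\operatorname{dist}(a,b)$ is the distance between $a$ and $b$ in $U(G)$, defined to be $n^2$ if $a$ and $b$ lie in different connected components. The cost of a vertex $a$ is $c(a)=\sum_{w}\operatorname{dist}(a,w)$ (sum over all vertices $w$ of $G$). *)

theory Defs
  imports Main
begin

definition digraph :: "'a set \<Rightarrow> ('a \<times> 'a) set \<Rightarrow> bool" where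
  "digraph V A \<longleftrightarrow> finite V \<and> A \<subseteq> V \<times> V"

definition und_adj :: "('a \<times> 'a) set \<Rightarrow> ('a \<times> 'a) set" where
  "und_adj A = A \<union> A\<inverse>"

text \<open>Distance in U(G): length of a shortest walk, or n^2 if no walk exists.\<close>
definition gdist :: "'a set \<Rightarrow> ('a \<times> 'a) set \<Rightarrow> 'a \<Rightarrow> 'a \<Rightarrow> nat" where
  "gdist V A a b = (if \<exists>k. (a, b) \<in> und_adj A ^^ k
                    then (LEAST k. (a, b) \<in> und_adj A ^^ k)
                    else (card V)\<^sup>2)"

definition cost :: "'a set \<Rightarrow> ('a \<times> 'a) set \<Rightarrow> 'a \<Rightarrow> nat" where
  "cost V A a = (\<Sum>w\<in>V. gdist V A a w)"

end

theory Submission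
  imports Defs
begin

text \<open>Let \<open>D = dist(x, u)\<close>. Fix a vertex \<open>w\<close> whose distance from \<open>u\<close> drops when the arc
  \<open>uv\<close> is added. A shortest new \<open>u\<close>-\<open>w\<close> walk must use the new arc, so it contains an old
  \<open>v\<close>-\<open>w\<close> walk that is strictly shorter than it; preceded by the arc \<open>xv\<close> this shows that
  after adding \<open>xv\<close> the distance from \<open>x\<close> to \<open>w\<close> is at most the new distance from \<open>u\<close> to
  \<open>w\<close>. Together with \<open>dist(u, w) \<le> D + dist(x, w)\<close>, the gain of \<open>u\<close> at \<open>w\<close> is at most \<open>D\<close>
  plus the gain of \<open>x\<close> at \<open>w\<close>; summing over the \<open>n\<close> vertices gives the claim. The
  convention \<open>dist = n\<^sup>2\<close> for unreachable pairs is harmless because every finite distance is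
  at most \<open>n\<^sup>2\<close>.\<close>

lemma relpow_mono: "R \<subseteq> S \<Longrightarrow> (a, b) \<in> R ^^ k \<Longrightarrow> (a, b) \<in> (S :: 'a rel) ^^ k"
  by (induction k arbitrary: b) auto

lemma relpow_sym: "sym (R :: 'a rel) \<Longrightarrow> (a, b) \<in> R ^^ k \<Longrightarrow> (b, a) \<in> R ^^ k"
proof (induction k arbitrary: b)
  case (Suc k)
  then obtain y where "(a, y) \<in> R ^^ k" "(y, b) \<in> R" by auto
  with Suc show ?case by (meson relpow_Suc_I2 symD)
qed simp

lemma relpow_insert_sym_pair_cases:
  assumes "(a, w) \<in> insert (u, v) (insert (v, u) R) ^^ k"
  shows "(\<exists>j\<le>k. (a, w) \<in> R ^^ j) \<or> (\<exists>j<k. (v, w) \<in> R ^^ j) \<or> (\<exists>j<k. (u, w) \<in> R ^^ j)"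
  using assms
proof (induction k arbitrary: a)
  case (Suc k)
  then obtain y where step: "(a, y) \<in> insert (u, v) (insert (v, u) R)"
    and rest: "(y, w) \<in> insert (u, v) (insert (v, u) R) ^^ k"
    by (blast elim: relpow_Suc_E2)
  from Suc.IH[OF rest] show ?case
  proof (elim disjE exE conjE)
    fix j assume j: "j \<le> k" "(y, w) \<in> R ^^ j"
    show ?thesis
    proof (cases "(a, y) \<in> R")
      case True
      with j show ?thesis by (metis Suc_le_mono relpow_Suc_I2)
    next
      case False
      with step j show ?thesis by (auto simp: le_imp_less_Suc)
    qed
  qed (auto intro: less_SucI)
qed simp

lemma und_adj_insert: "und_adj (insert (p, q) A) = insert (p, q) (insert (q, p) (und_adj A))"
  unfolding und_adj_def by auto

lemma sym_und_adj: "sym (und_adj A)"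
  unfolding und_adj_def sym_def by auto

lemma gdist_le: "(a, b) \<in> und_adj A ^^ k \<Longrightarrow> gdist V A a b \<le> k"
  unfolding gdist_def by (auto intro: Least_le)

lemma gdist_walk: "(a, b) \<in> und_adj A ^^ k \<Longrightarrow> (a, b) \<in> und_adj A ^^ gdist V A a b"
  unfolding gdist_def by (auto intro: LeastI)

lemma gdist_unreachable: "\<nexists>k. (a, b) \<in> und_adj A ^^ k \<Longrightarrow> gdist V A a b = (card V)\<^sup>2"
  unfolding gdist_def by auto

lemma gdist_le_card_sq:
  assumes "digraph V A"
  shows "gdist V A a b \<le> (card V)\<^sup>2"
proof (cases "\<exists>k. (a, b) \<in> und_adj A ^^ k")
  case True
  then obtain k where "(a, b) \<in> und_adj A ^^ k" by auto
  have sub: "und_adj A \<subseteq> V \<times> V"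
    using assms unfolding digraph_def und_adj_def by auto
  with assms have "finite (und_adj A)"
    unfolding digraph_def by (meson finite_SigmaI finite_subset)
  with \<open>(a, b) \<in> und_adj A ^^ k\<close> obtain m where "m \<le> card (und_adj A)" "(a, b) \<in> und_adj A ^^ m"
    using relpow_finite_bounded by blast
  moreover have "card (und_adj A) \<le> (card V)\<^sup>2"
    using card_mono[OF _ sub] assms
    by (simp add: digraph_def card_cartesian_product power2_eq_square)
  ultimately show ?thesis by (meson gdist_le le_trans)
qed (simp add: gdist_unreachable)

lemma gdist_commute: "gdist V A a b = gdist V A b a"
proof -
  have "(a, b) \<in> und_adj A ^^ k \<longleftrightarrow> (b, a) \<in> und_adj A ^^ k" for k
    by (metis relpow_sym sym_und_adj)
  then show ?thesis unfolding gdist_def by simp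
qed

lemma gdist_triangle:
  assumes "digraph V A"
  shows "gdist V A a c \<le> gdist V A a b + gdist V A b c"
proof (cases "(\<exists>k. (a, b) \<in> und_adj A ^^ k) \<and> (\<exists>k. (b, c) \<in> und_adj A ^^ k)")
  case True
  then have "(a, b) \<in> und_adj A ^^ gdist V A a b" "(b, c) \<in> und_adj A ^^ gdist V A b c"
    by (auto intro: gdist_walk)
  then show ?thesis by (meson gdist_le relpow_trans)
next
  case False
  then show ?thesis
    using gdist_unreachable gdist_le_card_sq[OF assms, of a c] by (metis trans_le_add1 trans_le_add2)
qed

lemma gdist_antimono:
  assumes "A \<subseteq> B" "digraph V B"
  shows "gdist V B a b \<le> gdist V A a b"
proof (cases "\<exists>k. (a, b) \<in> und_adj A ^^ k")
  case True
  then have "(a, b) \<in> und_adj A ^^ gdist V A a b" by (auto intro: gdist_walk)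
  moreover have "und_adj A \<subseteq> und_adj B" using assms(1) unfolding und_adj_def by auto
  ultimately show ?thesis by (meson gdist_le relpow_mono)
next
  case False
  then show ?thesis using gdist_unreachable gdist_le_card_sq[OF assms(2)] by metis
qed

lemma gdist_insert_arc_lessE:
  assumes "digraph V A" and less: "gdist V (insert (u, v) A) u w < gdist V A u w"
  obtains j where "j < gdist V (insert (u, v) A) u w" "(v, w) \<in> und_adj A ^^ j"
proof -
  let ?d = "gdist V (insert (u, v) A) u w"
  have "\<exists>k. (u, w) \<in> und_adj (insert (u, v) A) ^^ k"
    using less gdist_le_card_sq[OF assms(1), of u w] gdist_unreachable by (metis leD)
  then have "(u, w) \<in> insert (u, v) (insert (v, u) (und_adj A)) ^^ ?d"
    using gdist_walk und_adj_insert by metis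
  moreover have "\<not> (u, w) \<in> und_adj A ^^ j" if "j \<le> ?d" for j
    using that less gdist_le[where V = V and k = j] by fastforce
  ultimately show thesis
    using that relpow_insert_sym_pair_cases by (metis less_imp_le)
qed

lemma gdist_gain_le:
  assumes "digraph V A" "x \<in> V" "v \<in> V"
  shows "int (gdist V A u w) - int (gdist V (insert (u, v) A) u w)
           \<le> int (gdist V A x u) + int (gdist V A x w) - int (gdist V (insert (x, v) A) x w)"
proof -
  have digraph_xv: "digraph V (insert (x, v) A)"
    using assms unfolding digraph_def by auto
  show ?thesis
  proof (cases "gdist V (insert (u, v) A) u w < gdist V A u w")
    case True
    then obtain j where j: "j < gdist V (insert (u, v) A) u w" "(v, w) \<in> und_adj A ^^ j"
      using gdist_insert_arc_lessE[OF assms(1)] by blast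
    moreover have "und_adj A \<subseteq> und_adj (insert (x, v) A)"
      unfolding und_adj_def by auto
    ultimately have "(v, w) \<in> und_adj (insert (x, v) A) ^^ j"
      by (meson relpow_mono)
    then have "(x, w) \<in> und_adj (insert (x, v) A) ^^ Suc j"
      by (rule relpow_Suc_I2[rotated]) (simp add: und_adj_def)
    then have "gdist V (insert (x, v) A) x w \<le> gdist V (insert (u, v) A) u w"
      using j(1) gdist_le by (meson Suc_leI le_trans)
    moreover have "gdist V A u w \<le> gdist V A x u + gdist V A x w"
      using gdist_triangle[OF assms(1), where a = u and b = x and c = w]
        gdist_commute[of V A u x] by simp
    ultimately show ?thesis by linarith
  next
    case False
    moreover have "gdist V (insert (x, v) A) x w \<le> gdist V A x w"
      using gdist_antimono[OF _ digraph_xv] by blast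
    ultimately show ?thesis by linarith
  qed
qed

theorem mainTheorem16:
  fixes V :: "'a set" and A :: "('a \<times> 'a) set" and u v x :: 'a and s :: int
  assumes "digraph V A"
    and "u \<in> V" "v \<in> V" "x \<in> V"
    and "(u, v) \<notin> A"
    and "s = int (cost V A u) - int (cost V (insert (u, v) A) u)"
    and "s > int (card V) * int (gdist V A x u)"
  shows "int (cost V A x) - int (cost V (insert (x, v) A) x)
           \<ge> s - int (card V) * int (gdist V A x u)"
proof -
  have "s = (\<Sum>w\<in>V. int (gdist V A u w) - int (gdist V (insert (u, v) A) u w))"
    using assms(6) unfolding cost_def by (simp add: sum_subtractf)
  also have "\<dots> \<le> (\<Sum>w\<in>V. int (gdist V A x u)
                           + int (gdist V A x w) - int (gdist V (insert (x, v) A) x w))"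
    by (rule sum_mono) (rule gdist_gain_le[OF assms(1,4,3)])
  also have "\<dots> = int (card V) * int (gdist V A x u)
                    + (int (cost V A x) - int (cost V (insert (x, v) A) x))"
    unfolding cost_def by (simp add: sum.distrib sum_subtractf)
  finally show ?thesis by linarith
qed

end
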